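(* Let $r>0$ and let $Z$ be a set of homeomorphisms $[0,r)\to[0,r)$ such that (i) $(\alpha)z\ge\alpha$ for all $z\in Z$ and all $\alpha\in[0,r)$; (ii) $\mathrm{supp}(z)$ is an interval for every $z\in Z$; (iii) $\bigcup_{z\in Z}\mathrm{supp}(z)$ is dense in $(0,r)$. Let $f$ be a permutation of $[0,r)$ such that $f$ commutes with every $z\in Z$, $f$ is right-continuous at every point of $[0,r)$, and $f$ has only finitely many points of discontinuity. Then $f$ is continuous.
   Context: Maps act on the right. For a permutation $g$ of a set $S$, $\mathrm{fix}(g)$ is its set of fixed points and $\mathrm{supp}(g)=S\setminus\mathrm{fix}(g)$. *)

theory Defs
  imports "HOL-Analysis.Analysis"
begin

text \<open>Support of a map z restricted to the set S (maps act on the right: (alpha)z = z alpha).\<close>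
definition supp_on :: "real set \<Rightarrow> (real \<Rightarrow> real) \<Rightarrow> real set" where
  "supp_on S z = {a \<in> S. z a \<noteq> a}"

end

theory Submission
  imports Defs
begin

(* Let D (called disc below) be the finite set of discontinuities of f; as f is
   right-continuous, they are all failures of continuity from the left.
   1. Each z in Z conjugates f to itself, f = z o f o z^-1; hence the inverse g of z maps D
      into D.  Since g a <= a, an injective self-map of the finite set D that never moves a
      point up is the identity: every z in Z fixes D pointwise.
   2. A point x of the support I of some z is pushed to the right by z and to the left by g,
      and these orbits leave every compact part of the interval I (their limits would be
      fixed points).  Since f preserves I and commutes with z and g, this yields points
      w of I with w, f w both >= x (resp. both <= x).
   3. For d in D, density of the supports gives such supports arbitrarily close to d on
      either side, and they do not contain d by step 1.  Hence there are points w -> d from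
      either side with f w -> d.  Right-continuity gives f d = d; continuity and injectivity
      of f on a punctured left neighbourhood of d (D is finite) then give left-continuity.
   So f is continuous at d after all, i.e. D is empty. *)

lemma funpow_in_invariant:
  assumes "\<forall>a\<in>I. h a \<in> I" and "y \<in> I"
  shows "(h ^^ k) y \<in> I"
  by (induction k) (use assms in auto)

lemma funpow_commute_on:
  assumes "\<forall>a\<in>A. h a \<in> A" and "\<forall>a\<in>A. f (h a) = h (f a)" and "a \<in> A"
  shows "f ((h ^^ k) a) = (h ^^ k) (f a)"
  by (induction k) (use assms funpow_in_invariant[OF assms(1,3)] in auto)

lemma funpow_ge_on:
  fixes h :: "'a::order \<Rightarrow> 'a"
  assumes "\<forall>a\<in>I. h a \<in> I \<and> a \<le> h a" and "y \<in> I"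
  shows "y \<le> (h ^^ k) y"
  by (induction k) (use assms funpow_in_invariant[of I h y] in \<open>auto intro: order_trans\<close>)

lemma funpow_le_on:
  fixes h :: "'a::order \<Rightarrow> 'a"
  assumes "\<forall>a\<in>I. h a \<in> I \<and> h a \<le> a" and "y \<in> I"
  shows "(h ^^ k) y \<le> y"
  by (induction k) (use assms funpow_in_invariant[of I h y] in \<open>auto intro: order_trans\<close>)

(* An orbit of a continuous self-map of an interval without fixed points that pushes points
   up cannot stay bounded inside the interval: its limit would be a fixed point. *)
lemma orbit_exceeds:
  fixes h :: "real \<Rightarrow> real"
  assumes cont: "continuous_on I h" and I: "is_interval I"
    and up: "\<forall>a\<in>I. h a \<in> I \<and> a < h a" and y: "y \<in> I" and p: "p \<in> I"
  shows "\<exists>k. p \<le> (h ^^ k) y"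
proof (rule ccontr)
  assume "\<not> ?thesis"
  hence below: "(h ^^ k) y \<le> p" for k by (simp add: not_le less_imp_le)
  define s where "s k = (h ^^ k) y" for k
  have s_in: "s k \<in> I" for k
    unfolding s_def by (rule funpow_in_invariant) (use up y in auto)
  have s_Suc: "s (Suc k) = h (s k)" for k by (simp add: s_def)
  have "incseq s"
    by (rule incseq_SucI) (use up s_in s_Suc in \<open>auto intro: less_imp_le\<close>)
  moreover have "bdd_above (range s)"
    using below unfolding s_def by (auto intro!: bdd_aboveI[of _ p])
  ultimately have lim: "s \<longlonglongrightarrow> (SUP k. s k)" by (rule LIMSEQ_incseq_SUP[rotated])
  define l where "l = (SUP k. s k)"
  have "y \<le> l"
    using \<open>incseq s\<close>
    by (intro LIMSEQ_le_const[OF lim[folded l_def]]) (metis incseq_def le0 funpow_0 s_def)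
  moreover have "l \<le> p"
    using below by (intro LIMSEQ_le_const2[OF lim[folded l_def]]) (auto simp: s_def)
  ultimately have l_in: "l \<in> I" using I y p unfolding is_interval_1 by blast
  have "(\<lambda>k. h (s k)) \<longlonglongrightarrow> h l"
    using continuous_on_tendsto_compose[OF cont lim[folded l_def] l_in] s_in by auto
  moreover have "(\<lambda>k. h (s k)) \<longlonglongrightarrow> l"
    using LIMSEQ_Suc[OF lim[folded l_def]] by (simp add: s_Suc)
  ultimately have "h l = l" by (rule LIMSEQ_unique)
  thus False using up l_in by auto
qed

(* The mirror image of the previous lemma, obtained by conjugating with x \<mapsto> -x. *)
lemma orbit_falls_below:
  fixes h :: "real \<Rightarrow> real"
  assumes cont: "continuous_on I h" and I: "is_interval I"
    and down: "\<forall>a\<in>I. h a \<in> I \<and> h a < a" and y: "y \<in> I" and p: "p \<in> I"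
  shows "\<exists>k. (h ^^ k) y \<le> p"
proof -
  define h' where "h' x = - h (- x)" for x
  have iter: "(h' ^^ k) (- y) = - (h ^^ k) y" for k
    by (induction k) (simp_all add: h'_def)
  have "continuous_on (uminus ` I) h'"
    unfolding h'_def by (intro continuous_intros continuous_on_compose2[OF cont]) auto
  moreover have "\<forall>a\<in>uminus ` I. h' a \<in> uminus ` I \<and> a < h' a"
    using down by (auto simp: h'_def image_iff)
  ultimately obtain k where "- p \<le> (h' ^^ k) (- y)"
    using orbit_exceeds[of "uminus ` I" h' "- y" "- p"] I y p by auto
  thus ?thesis by (auto simp: iter)
qed

(* If f preserves an interval I on which h pushes points up and f commutes with h, then
   beyond every x in I there is a w in I with f w also beyond x: take w = h^k x, where
   h^k (f x) has passed x. *)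
lemma commuting_point_above:
  fixes h f :: "real \<Rightarrow> real"
  assumes cont: "continuous_on I h" and I: "is_interval I"
    and up: "\<forall>a\<in>I. h a \<in> I \<and> a < h a" and fI: "\<forall>a\<in>I. f a \<in> I"
    and comm: "\<forall>a\<in>I. f (h a) = h (f a)" and x: "x \<in> I"
  shows "\<exists>w\<in>I. x \<le> w \<and> x \<le> f w"
proof -
  have hI: "\<forall>a\<in>I. h a \<in> I" using up by blast
  obtain k where k: "x \<le> (h ^^ k) (f x)"
    using orbit_exceeds[OF cont I up] fI x by blast
  have "(h ^^ k) x \<in> I" using funpow_in_invariant[OF hI x] .
  moreover have "x \<le> (h ^^ k) x" using funpow_ge_on[of I h x k] up x by (auto intro: less_imp_le)
  moreover have "f ((h ^^ k) x) = (h ^^ k) (f x)" using funpow_commute_on[OF hI comm x] .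
  ultimately show ?thesis using k by auto
qed

lemma commuting_point_below:
  fixes h f :: "real \<Rightarrow> real"
  assumes cont: "continuous_on I h" and I: "is_interval I"
    and down: "\<forall>a\<in>I. h a \<in> I \<and> h a < a" and fI: "\<forall>a\<in>I. f a \<in> I"
    and comm: "\<forall>a\<in>I. f (h a) = h (f a)" and x: "x \<in> I"
  shows "\<exists>w\<in>I. w \<le> x \<and> f w \<le> x"
proof -
  have hI: "\<forall>a\<in>I. h a \<in> I" using down by blast
  obtain k where k: "(h ^^ k) (f x) \<le> x"
    using orbit_falls_below[OF cont I down] fI x by blast
  have "(h ^^ k) x \<in> I" using funpow_in_invariant[OF hI x] .
  moreover have "(h ^^ k) x \<le> x" using funpow_le_on[of I h x k] down x by (auto intro: less_imp_le)
  moreover have "f ((h ^^ k) x) = (h ^^ k) (f x)" using funpow_commute_on[OF hI comm x] .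
  ultimately show ?thesis using k by auto
qed

lemma supp_on_invariant:
  assumes inj: "inj_on h S" and hS: "\<forall>a\<in>S. h a \<in> S" and zS: "\<forall>a\<in>S. z a \<in> S"
    and comm: "\<forall>a\<in>S. h (z a) = z (h a)" and x: "x \<in> supp_on S z"
  shows "h x \<in> supp_on S z"
proof -
  have "x \<in> S" "z x \<noteq> x" using x by (auto simp: supp_on_def)
  hence "h (z x) \<noteq> h x" using inj zS by (auto dest: inj_onD)
  thus ?thesis using comm hS \<open>x \<in> S\<close> by (simp add: supp_on_def)
qed

(* An injective self-map of a finite set that never moves points up is the identity:
   it permutes the set, so the sum of the g a equals the sum of the a. *)
lemma finite_descending_injection_is_id:
  fixes g :: "'a::ordered_cancel_comm_monoid_add \<Rightarrow> 'a"
  assumes fin: "finite D" and maps: "g ` D \<subseteq> D" and inj: "inj_on g D"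
    and desc: "\<forall>a\<in>D. g a \<le> a" and a: "a \<in> D"
  shows "g a = a"
proof -
  have "g ` D = D" using endo_inj_surj[OF fin maps inj] .
  hence "sum g D = sum id D" using sum.reindex[OF inj, of id] by simp
  thus ?thesis using sum_mono_inv[of g D id a] desc a fin by simp
qed

lemma continuous_within_conjugate:
  assumes eq: "\<forall>x\<in>S. f x = u (f (v x))" and vS: "v ` S \<subseteq> S" and a: "a \<in> S"
    and v: "continuous (at a within S) v" and f: "continuous (at (v a) within S) f"
    and u: "continuous (at (f (v a)) within f ` S) u"
  shows "continuous (at a within S) f"
proof -
  have "continuous (at (v a) within v ` S) f"
    using f vS continuous_within_subset by blast
  hence "continuous (at a within S) (\<lambda>x. f (v x))"
    using continuous_within_compose2[OF v] by blast
  moreover have "continuous (at (f (v a)) within (\<lambda>x. f (v x)) ` S) u"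
    by (rule continuous_within_subset[OF u]) (use vS in auto)
  ultimately have "continuous (at a within S) (\<lambda>x. u (f (v x)))"
    using continuous_within_compose2 by fastforce
  moreover have "\<forall>\<^sub>F x in at a within S. u (f (v x)) = f x"
    using eq by (auto simp: eventually_at_filter)
  ultimately show ?thesis
    unfolding continuous_within using eq a by (auto elim: tendsto_cong[THEN iffD1, rotated])
qed

lemma interval_avoiding_point:
  fixes I :: "real set"
  assumes "is_interval I" "d \<notin> I" "x \<in> I" "y \<in> I"
  shows "d < x \<longleftrightarrow> d < y"
proof -
  have "\<not> (x \<le> d \<and> d \<le> y)" "\<not> (y \<le> d \<and> d \<le> x)"
    using assms unfolding is_interval_1 by blast+
  thus ?thesis by auto
qed

lemma right_cluster_value_eq_limit:
  fixes f :: "real \<Rightarrow> real"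
  assumes lim: "(f \<longlongrightarrow> L) (at_right d)"
    and approach: "\<forall>e>0. \<exists>w. d < w \<and> w < d + e \<and> \<bar>f w - M\<bar> < e"
  shows "L = M"
proof (rule ccontr)
  assume "L \<noteq> M"
  define e where "e = \<bar>L - M\<bar> / 2"
  have e: "e > 0" using \<open>L \<noteq> M\<close> by (simp add: e_def)
  obtain b where b: "d < b" "\<forall>y. d < y \<and> y < b \<longrightarrow> \<bar>f y - L\<bar> < e"
    using lim e unfolding tendsto_iff eventually_at_right_field dist_real_def by blast
  obtain w where w: "d < w" "w < d + min e (b - d)" "\<bar>f w - M\<bar> < min e (b - d)"
    using approach e b(1) by (metis min_less_iff_conj diff_gt_0_iff_gt)
  have "\<bar>f w - L\<bar> < e" using b w by auto
  moreover have "\<bar>f w - M\<bar> < e" using w(3) by simp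
  ultimately show False unfolding e_def by (simp add: abs_if split: if_splits)
qed

(* A continuous injective function on ]c, d[ is monotone, so it has left limit L at d as soon
   as it takes values arbitrarily close to L at points arbitrarily close to d. *)
lemma left_limit_by_injectivity:
  fixes f :: "real \<Rightarrow> real"
  assumes cd: "c < d" and cont: "\<forall>x. c < x \<and> x < d \<longrightarrow> isCont f x"
    and inj: "inj_on f {c<..<d}"
    and approach: "\<forall>e>0. \<exists>w. d - e < w \<and> w < d \<and> \<bar>f w - L\<bar> < e"
  shows "(f \<longlongrightarrow> L) (at_left d)"
  unfolding tendsto_iff eventually_at_left_field dist_real_def
proof (intro allI impI)
  fix e :: real assume e: "e > 0"
  obtain w where w: "d - min e (d - c) < w" "w < d" "\<bar>f w - L\<bar> < e"
    using approach e cd by (metis min_less_iff_conj diff_gt_0_iff_gt)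
  show "\<exists>b<d. \<forall>y>b. y < d \<longrightarrow> \<bar>f y - L\<bar> < e"
  proof (intro exI[of _ w] conjI allI impI)
    fix y assume y: "w < y" "y < d"
    obtain w' where w': "d - min e (d - y) < w'" "w' < d" "\<bar>f w' - L\<bar> < e"
      using approach e y by (metis min_less_iff_conj diff_gt_0_iff_gt)
    have sub: "{w..w'} \<subseteq> {c<..<d}" using w w' by auto
    have "continuous_on {w..w'} f"
      using cont sub by (intro continuous_at_imp_continuous_on) auto
    moreover have "inj_on f {w..w'}" using inj_on_subset[OF inj sub] .
    ultimately have "(f w < f y \<and> f y < f w') \<or> (f w' < f y \<and> f y < f w)"
      using continuous_inj_imp_mono[of w y w' f] y w' by auto
    thus "\<bar>f y - L\<bar> < e" using w(3) w'(3) by auto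
  qed (fact w(2))
qed

locale commuting_permutation =
  fixes r :: real and Z :: "(real \<Rightarrow> real) set" and f :: "real \<Rightarrow> real"
  assumes r_pos: "r > 0"
    and homeo: "\<forall>z\<in>Z. \<exists>g. homeomorphism {0..<r} {0..<r} z g"
    and incr: "\<forall>z\<in>Z. \<forall>a\<in>{0..<r}. z a \<ge> a"
    and interval: "\<forall>z\<in>Z. is_interval (supp_on {0..<r} z)"
    and dense: "{0<..<r} \<subseteq> closure (\<Union>z\<in>Z. supp_on {0..<r} z)"
    and perm: "bij_betw f {0..<r} {0..<r}"
    and commute: "\<forall>z\<in>Z. \<forall>a\<in>{0..<r}. f (z a) = z (f a)"
    and rcont: "\<forall>a\<in>{0..<r}. continuous (at_right a) f"
    and fin: "finite {a \<in> {0..<r}. \<not> continuous (at a within {0..<r}) f}"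
begin

definition disc :: "real set" where
  "disc = {a \<in> {0..<r}. \<not> continuous (at a within {0..<r}) f}"

lemma finite_disc: "finite disc"
  using fin by (simp add: disc_def)

lemma f_maps: "\<forall>a\<in>{0..<r}. f a \<in> {0..<r}"
  using perm by (auto simp: bij_betw_def)

lemma inverse_in_Z:
  assumes z: "z \<in> Z"
  obtains g where "homeomorphism {0..<r} {0..<r} z g"
    and "\<forall>a\<in>{0..<r}. g a \<le> a" and "\<forall>a\<in>{0..<r}. f (g a) = g (f a)"
proof -
  obtain g where hom: "homeomorphism {0..<r} {0..<r} z g" using homeo z by blast
  hence gS: "\<forall>a\<in>{0..<r}. g a \<in> {0..<r}" and zg: "\<forall>a\<in>{0..<r}. z (g a) = a"
    and gz: "\<forall>a\<in>{0..<r}. g (z a) = a"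
    by (auto simp: homeomorphism_def)
  have "\<forall>a\<in>{0..<r}. g a \<le> a" using incr z gS zg by metis
  moreover have "f (g a) = g (f a)" if a: "a \<in> {0..<r}" for a
  proof -
    have "g (f a) = g (f (z (g a)))" using zg a by simp
    also have "\<dots> = g (z (f (g a)))" using commute z gS a by simp
    also have "\<dots> = f (g a)" using gz f_maps gS a by simp
    finally show ?thesis by simp
  qed
  ultimately show ?thesis using hom that by blast
qed

(* Conjugation f = z o f o g by the inverse g of z: g maps discontinuities of f to
   discontinuities of f. *)
lemma inverse_maps_disc:
  assumes hom: "homeomorphism {0..<r} {0..<r} z g"
    and fg: "\<forall>a\<in>{0..<r}. f (g a) = g (f a)" and a: "a \<in> disc"
  shows "g a \<in> disc"
proof (rule ccontr)
  define S where "S = {0..<r::real}"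
  assume "g a \<notin> disc"
  have gS: "\<forall>a\<in>S. g a \<in> S" and zg: "\<forall>a\<in>S. z (g a) = a"
    and cont_g: "continuous_on S g" and cont_z: "continuous_on S z"
    using hom by (auto simp: homeomorphism_def S_def)
  have fS: "f ` S = S" using perm by (simp add: bij_betw_def S_def)
  have aS: "a \<in> S" using a by (simp add: disc_def S_def)
  have "continuous (at a within S) f"
  proof (rule continuous_within_conjugate)
    show "\<forall>x\<in>S. f x = z (f (g x))"
    proof
      fix x assume x: "x \<in> S"
      hence "f x \<in> S" using fS by blast
      thus "f x = z (f (g x))" using fg zg x by (simp add: S_def)
    qed
    show "g ` S \<subseteq> S" "a \<in> S" using gS aS by auto
    show "continuous (at a within S) g"
      using cont_g aS by (simp add: continuous_on_eq_continuous_within)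
    show "continuous (at (g a) within S) f"
      using \<open>g a \<notin> disc\<close> gS aS by (auto simp: disc_def S_def)
    have "f (g a) \<in> S" using fS gS aS by blast
    thus "continuous (at (f (g a)) within f ` S) z"
      using cont_z fS by (simp add: continuous_on_eq_continuous_within)
  qed
  thus False using a by (simp add: disc_def S_def)
qed

lemma disc_fixed_by_Z:
  assumes z: "z \<in> Z" and d: "d \<in> disc"
  shows "z d = d"
proof -
  obtain g where hom: "homeomorphism {0..<r} {0..<r} z g" and g_le: "\<forall>a\<in>{0..<r}. g a \<le> a"
    and fg: "\<forall>a\<in>{0..<r}. f (g a) = g (f a)"
    using inverse_in_Z[OF z] by blast
  have zg: "\<forall>a\<in>{0..<r}. z (g a) = a" using hom by (simp add: homeomorphism_def)
  have disc_S: "disc \<subseteq> {0..<r}" by (auto simp: disc_def)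
  have "g d = d"
  proof (rule finite_descending_injection_is_id[OF _ _ _ _ d])
    show "finite disc" by (rule finite_disc)
    show "g ` disc \<subseteq> disc" using inverse_maps_disc[OF hom fg] by blast
    show "inj_on g disc" using zg disc_S by (intro inj_on_inverseI[where g = z]) auto
    show "\<forall>a\<in>disc. g a \<le> a" using g_le disc_S by blast
  qed
  thus ?thesis using zg d disc_S by force
qed

lemma f_preserves_support:
  assumes z: "z \<in> Z"
  shows "\<forall>x\<in>supp_on {0..<r} z. f x \<in> supp_on {0..<r} z"
proof -
  obtain g where "homeomorphism {0..<r} {0..<r} z g" using homeo z by blast
  hence "\<forall>a\<in>{0..<r}. z a \<in> {0..<r}" by (auto simp: homeomorphism_def)
  thus ?thesis
    using supp_on_invariant[of f "{0..<r}" z] perm commute z f_maps by (simp add: bij_betw_def)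
qed

(* Step 2: inside the support of z in Z, on both sides of every point x, there is a w with
   f w on the same side of x.  On the support, z pushes points up and its inverse down. *)
lemma points_in_support:
  assumes z: "z \<in> Z" and x: "x \<in> supp_on {0..<r} z"
  shows "\<exists>w\<in>supp_on {0..<r} z. x \<le> w \<and> x \<le> f w"
    and "\<exists>w\<in>supp_on {0..<r} z. w \<le> x \<and> f w \<le> x"
proof -
  define S where "S = {0..<r::real}"
  define I where "I = supp_on S z"
  obtain g where hom: "homeomorphism S S z g" and g_le: "\<forall>a\<in>S. g a \<le> a"
    and fg: "\<forall>a\<in>S. f (g a) = g (f a)"
    using inverse_in_Z[OF z] unfolding S_def by blast
  have zS: "\<forall>a\<in>S. z a \<in> S" and gS: "\<forall>a\<in>S. g a \<in> S"
    and zg: "\<forall>a\<in>S. z (g a) = a" and gz: "\<forall>a\<in>S. g (z a) = a"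
    using hom by (auto simp: homeomorphism_def)
  have IS: "I \<subseteq> S" by (auto simp: I_def supp_on_def)
  have I: "is_interval I" using interval z by (simp add: I_def S_def)
  have fI: "\<forall>a\<in>I. f a \<in> I" using f_preserves_support[OF z] by (simp add: I_def S_def)
  have inj_z: "inj_on z S" by (rule inj_on_inverseI[where g = g]) (use gz in auto)
  have inj_g: "inj_on g S" by (rule inj_on_inverseI[where g = z]) (use zg in auto)
  have z_up: "\<forall>a\<in>I. z a \<in> I \<and> a < z a"
  proof
    fix a assume a: "a \<in> I"
    hence "z a \<in> I" using supp_on_invariant[OF inj_z zS zS] by (simp add: I_def)
    moreover have "a \<le> z a" "z a \<noteq> a" using a incr z IS by (auto simp: I_def supp_on_def S_def)
    ultimately show "z a \<in> I \<and> a < z a" by simp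
  qed
  have g_down: "\<forall>a\<in>I. g a \<in> I \<and> g a < a"
  proof
    fix a assume a: "a \<in> I"
    hence "g a \<in> I" using supp_on_invariant[OF inj_g gS zS] gz zg by (simp add: I_def)
    moreover have "g a \<le> a" "z a \<noteq> a" using a g_le IS by (auto simp: I_def supp_on_def)
    moreover have "g a \<noteq> a" using \<open>z a \<noteq> a\<close> zg a IS by (metis subsetD)
    ultimately show "g a \<in> I \<and> g a < a" by simp
  qed
  have "continuous_on I z" "continuous_on I g"
    using hom IS by (auto simp: homeomorphism_def intro: continuous_on_subset)
  moreover have "\<forall>a\<in>I. f (z a) = z (f a)" "\<forall>a\<in>I. f (g a) = g (f a)"
    using commute z fg IS by (auto simp: S_def)
  moreover have "x \<in> I" using x by (simp add: I_def S_def)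
  ultimately show "\<exists>w\<in>supp_on {0..<r} z. x \<le> w \<and> x \<le> f w"
    and "\<exists>w\<in>supp_on {0..<r} z. w \<le> x \<and> f w \<le> x"
    using commuting_point_above[OF _ I z_up fI] commuting_point_below[OF _ I g_down fI]
    unfolding I_def S_def by blast+
qed

(* At 0, right-continuity is continuity within [0, r). *)
lemma zero_not_disc: "0 \<notin> disc"
proof -
  have "continuous (at 0 within {0<..}) f" using rcont r_pos by auto
  moreover have "at (0::real) within {0..<r} = at 0 within {0<..}"
    by (rule at_within_nhd[where S = "{..<r}"]) (use r_pos in auto)
  ultimately show ?thesis by (simp add: disc_def)
qed

lemma support_meets_interval:
  assumes "0 \<le> a" "a < b" "b \<le> r"
  shows "\<exists>z\<in>Z. \<exists>x\<in>supp_on {0..<r} z. a < x \<and> x < b"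
proof -
  have "(a + b) / 2 \<in> {a<..<b} \<inter> closure (\<Union>z\<in>Z. supp_on {0..<r} z)"
    using dense assms by auto
  hence "{a<..<b} \<inter> closure (\<Union>z\<in>Z. supp_on {0..<r} z) \<noteq> {}" by blast
  hence "{a<..<b} \<inter> (\<Union>z\<in>Z. supp_on {0..<r} z) \<noteq> {}"
    by (simp add: open_Int_closure_eq_empty[OF open_greaterThanLessThan])
  thus ?thesis by auto
qed

(* Step 3: points w arbitrarily close to a discontinuity d from the right with f w close to d.
   The support found in ]d, d + e[ lies right of d, since it avoids d. *)
lemma approach_from_right:
  assumes d: "d \<in> disc" and e: "e > 0"
  shows "\<exists>w. d < w \<and> w < d + e \<and> \<bar>f w - d\<bar> < e"
proof -
  have "0 \<le> d" "d < r" using d by (auto simp: disc_def)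
  then obtain z x where z: "z \<in> Z" and x: "x \<in> supp_on {0..<r} z"
    and dx: "d < x" and xe: "x < d + e"
    using support_meets_interval[of d "min (d + e) r"] e by auto
  have "d \<notin> supp_on {0..<r} z" using disc_fixed_by_Z[OF z d] by (simp add: supp_on_def)
  hence right: "\<forall>y\<in>supp_on {0..<r} z. d < y"
    using interval_avoiding_point[OF _ _ x] interval z dx by blast
  obtain w where w: "w \<in> supp_on {0..<r} z" "w \<le> x" "f w \<le> x"
    using points_in_support(2)[OF z x] by blast
  have "d < w" "d < f w" using right w(1) f_preserves_support[OF z] by auto
  thus ?thesis using w xe by (intro exI[of _ w]) auto
qed

lemma approach_from_left:
  assumes d: "d \<in> disc" and e: "e > 0"
  shows "\<exists>w. d - e < w \<and> w < d \<and> \<bar>f w - d\<bar> < e"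
proof -
  have "0 < d" "d < r" using d zero_not_disc by (auto simp: disc_def less_le)
  then obtain z x where z: "z \<in> Z" and x: "x \<in> supp_on {0..<r} z"
    and xd: "x < d" and ex: "d - e < x"
    using support_meets_interval[of "max (d - e) 0" d] e by auto
  have "d \<notin> supp_on {0..<r} z" using disc_fixed_by_Z[OF z d] by (simp add: supp_on_def)
  hence left: "\<forall>y\<in>supp_on {0..<r} z. y < d"
    using interval_avoiding_point[OF _ _ x] interval z xd by (metis not_less_iff_gr_or_eq)
  obtain w where w: "w \<in> supp_on {0..<r} z" "x \<le> w" "x \<le> f w"
    using points_in_support(1)[OF z x] by blast
  have "w < d" "f w < d" using left w(1) f_preserves_support[OF z] by auto
  thus ?thesis using w ex by (intro exI[of _ w]) auto
qed

lemma f_fixes_disc: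
  assumes d: "d \<in> disc"
  shows "f d = d"
proof (rule right_cluster_value_eq_limit)
  show "(f \<longlongrightarrow> f d) (at_right d)"
    using rcont d by (simp add: disc_def continuous_within)
  show "\<forall>e>0. \<exists>w. d < w \<and> w < d + e \<and> \<bar>f w - d\<bar> < e"
    using approach_from_right[OF d] by blast
qed

(* f has no discontinuities: at a discontinuity d, f would be continuous from the right by
   hypothesis and from the left by monotonicity on the gap below d to the next one. *)
lemma disc_empty: "disc = {}"
proof (rule ccontr)
  assume "disc \<noteq> {}"
  then obtain d where d: "d \<in> disc" by auto
  have d_pos: "0 < d" "d < r" using d zero_not_disc by (auto simp: disc_def less_le)
  define C where "C = insert 0 {x \<in> disc. x < d}"
  define c where "c = Max C"
  have finC: "finite C" using finite_disc by (simp add: C_def)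
  have c: "0 \<le> c" "c < d" using finC d_pos by (auto simp: c_def C_def)
  have interior_pt: "at x within {0..<r} = at x" if "0 < x" "x < r" for x
    by (rule at_within_interior) (use that in auto)
  have cont: "\<forall>x. c < x \<and> x < d \<longrightarrow> isCont f x"
  proof (intro allI impI)
    fix x assume x: "c < x \<and> x < d"
    hence "x \<notin> disc" using Max_ge[OF finC, of x] by (auto simp: c_def C_def)
    thus "isCont f x" using x c d_pos interior_pt[of x] by (auto simp: disc_def)
  qed
  have "inj_on f {c<..<d}"
    using perm c d_pos by (auto simp: bij_betw_def intro: inj_on_subset)
  hence "(f \<longlongrightarrow> d) (at_left d)"
    using left_limit_by_injectivity[OF c(2) cont] approach_from_left[OF d] by blast
  hence "continuous (at_left d) f" using f_fixes_disc[OF d] by (simp add: continuous_within)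
  moreover have "continuous (at_right d) f" using rcont d_pos by simp
  ultimately have "isCont f d" by (simp add: continuous_at_split)
  thus False using d interior_pt[OF d_pos] by (simp add: disc_def)
qed

end

theorem lemma3p2:
  fixes r :: real and Z :: "(real \<Rightarrow> real) set" and f :: "real \<Rightarrow> real"
  assumes r_pos: "r > 0"
    and homeo: "\<forall>z\<in>Z. \<exists>g. homeomorphism {0..<r} {0..<r} z g"
    and incr: "\<forall>z\<in>Z. \<forall>a\<in>{0..<r}. z a \<ge> a"
    and interval: "\<forall>z\<in>Z. is_interval (supp_on {0..<r} z)"
    and dense: "{0<..<r} \<subseteq> closure (\<Union>z\<in>Z. supp_on {0..<r} z)"
    and perm: "bij_betw f {0..<r} {0..<r}"
    and commute: "\<forall>z\<in>Z. \<forall>a\<in>{0..<r}. f (z a) = z (f a)"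
    and rcont: "\<forall>a\<in>{0..<r}. continuous (at_right a) f"
    and fin: "finite {a \<in> {0..<r}. \<not> continuous (at a within {0..<r}) f}"
  shows "continuous_on {0..<r} f"
proof -
  interpret commuting_permutation r Z f
    by (rule commuting_permutation.intro[OF assms])
  show ?thesis
    using disc_empty by (auto simp: disc_def continuous_on_eq_continuous_within)
qed

end
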